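(* Let $\mathcal{G}_n=\mathcal{G}(\mathcal{X}_n\cup\{S,T\};r_n)$ be a random geometric graph with $r_n=\omega(1)\left(\frac{\log n}{n}\right)^{1/d}$. Then $\mathcal{G}_n$ contains a monotone path $\vec\sigma_n\in \Sigma(S,T)$ such that $\mathcal{M}(\vec\sigma_n)=(1+o(1))\mathcal{M}(\vec\sigma^* )$, almost surely.
   Context: Fix a dimension $d\geq 2$. Let $\mathcal{M}:[0,1]^d\rightarrow \mathbb{R}$ be a cost map and $S,T\in[0,1]^d$ start and target points. $\Sigma(S,T)$ denotes the set of continuous paths $\sigma:[0,1]\rightarrow[0,1]^d$ with $\sigma(0)=S$, $\sigma(1)=T$, and the bottleneck cost of a path is $\mathcal{M}(\sigma)=\max_{\tau\in[0,1]}\mathcal{M}(\sigma(\tau))$. For $p=(p_1,\dots,p_d)$, $p'=(p'_1,\dots,p'_d)$, write $p\preceq p'$ if $p_i\leq p'_i$ for all $i$; a path $\sigma$ is monotone if $\sigma(\tau)\preceq\sigma(\tau')$ whenever $0\leq\tau\leq\tau'\leq 1$. For $x\preceq x'$, write $x\preceq_\delta x'$ when $\delta=\min_i\{x'_i-x_i\}$. Let $\mathcal{B}_r(x)$ be the Euclidean ball of radius $r$ around $x$, $\mathcal{B}_r(\sigma)=\bigcup_{\tau\in[0,1]}\mathcal{B}_r(\sigma(\tau))$, and $\textup{Im}(\sigma)$ the image of $\sigma$. A path $\sigma\in\Sigma(S,T)$ is robust if for every $\varepsilon>0$ there is $\delta>0$ such that $\mathcal{M}(\sigma')\leq(1+\varepsilon)\mathcal{M}(\sigma)$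 for every $\sigma'\in\Sigma(S,T)$ with $\textup{Im}(\sigma')\subset\mathcal{B}_\delta(\sigma)$. Let $\vec\sigma^*$ be a robustly-optimal monotone path, i.e., a monotone robust path attaining the infimum bottleneck cost over all such paths. Assume there is a constant $\delta'>0$ with $\mathcal{B}_{\delta'}(\vec\sigma^* )\subset[0,1]^d$, and a constant $0<\delta''\leq 1$ with $S\preceq_{\delta''}T$. Let $\mathcal{X}_n$ be $n$ points drawn independently and uniformly at random from $[0,1]^d$. The random geometric graph $\mathcal{G}(\mathcal{X};r_n)$ is the directed graph on vertex set $\mathcal{X}$ with an edge $(x,y)$ for all distinct $x,y\in\mathcal{X}$ with $\|x-y\|_2\leq r_n$; each edge is viewed as the straight-line segment between its endpoints, so a path in the graph is a polygonal curve, and it is monotone if consecutive vertices satisfy $x\preceq y$. An event holds almost surely (a.s.) if its probability tends to $1$ as $n\rightarrow\infty$. Logarithms are natural. *)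

theory Defs
  imports "HOL-Probability.Probability"
begin

text \<open>Points of [0,1]^d are vectors in real^'d, d = CARD('d).\<close>

definition unit_cube :: "(real^'d) set" where
  "unit_cube = cbox 0 1"

definition preceq :: "real^'d \<Rightarrow> real^'d \<Rightarrow> bool" where
  "preceq x y \<longleftrightarrow> (\<forall>i. x$i \<le> y$i)"

definition preceq_delta :: "real^'d \<Rightarrow> real \<Rightarrow> real^'d \<Rightarrow> bool" where
  "preceq_delta x \<delta> y \<longleftrightarrow> preceq x y \<and> \<delta> = Min (range (\<lambda>i. y$i - x$i))"

definition Sigma_paths :: "real^'d \<Rightarrow> real^'d \<Rightarrow> (real \<Rightarrow> real^'d) set" where
  "Sigma_paths S T = {\<sigma>. path \<sigma> \<and> path_image \<sigma> \<subseteq> unit_cube \<and> pathstart \<sigma> = S \<and> pathfinish \<sigma> = T}"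

text \<open>Bottleneck cost, valued in extended reals (the max/sup may be infinite).\<close>
definition bcost :: "(real^'d \<Rightarrow> real) \<Rightarrow> (real \<Rightarrow> real^'d) \<Rightarrow> ereal" where
  "bcost M \<sigma> = (SUP \<tau>\<in>{0..1}. ereal (M (\<sigma> \<tau>)))"

definition mono_path :: "(real \<Rightarrow> real^'d) \<Rightarrow> bool" where
  "mono_path \<sigma> \<longleftrightarrow> (\<forall>\<tau> \<tau>'. 0 \<le> \<tau> \<longrightarrow> \<tau> \<le> \<tau>' \<longrightarrow> \<tau>' \<le> 1 \<longrightarrow> preceq (\<sigma> \<tau>) (\<sigma> \<tau>'))"

definition tube :: "real \<Rightarrow> (real \<Rightarrow> real^'d) \<Rightarrow> (real^'d) set" where
  "tube r \<sigma> = (\<Union>\<tau>\<in>{0..1}. ball (\<sigma> \<tau>) r)"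

definition robust :: "(real^'d \<Rightarrow> real) \<Rightarrow> real^'d \<Rightarrow> real^'d \<Rightarrow> (real \<Rightarrow> real^'d) \<Rightarrow> bool" where
  "robust M S T \<sigma> \<longleftrightarrow> \<sigma> \<in> Sigma_paths S T \<and>
     (\<forall>\<epsilon>>0. \<exists>\<delta>>0. \<forall>\<sigma>'\<in>Sigma_paths S T.
        path_image \<sigma>' \<subseteq> tube \<delta> \<sigma> \<longrightarrow> bcost M \<sigma>' \<le> ereal (1 + \<epsilon>) * bcost M \<sigma>)"

definition robustly_optimal_monotone ::
  "(real^'d \<Rightarrow> real) \<Rightarrow> real^'d \<Rightarrow> real^'d \<Rightarrow> (real \<Rightarrow> real^'d) \<Rightarrow> bool" where
  "robustly_optimal_monotone M S T \<sigma> \<longleftrightarrow> robust M S T \<sigma> \<and> mono_path \<sigma> \<and>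
     bcost M \<sigma> = (INF \<sigma>'\<in>{\<sigma>'. robust M S T \<sigma>' \<and> mono_path \<sigma>'}. bcost M \<sigma>')"

definition rgg_edge :: "(real^'d) set \<Rightarrow> real \<Rightarrow> real^'d \<Rightarrow> real^'d \<Rightarrow> bool" where
  "rgg_edge V r x y \<longleftrightarrow> x \<in> V \<and> y \<in> V \<and> x \<noteq> y \<and> dist x y \<le> r"

definition mono_graph_path :: "(real^'d) set \<Rightarrow> real \<Rightarrow> real^'d \<Rightarrow> real^'d \<Rightarrow> (real^'d) list \<Rightarrow> bool" where
  "mono_graph_path V r S T vs \<longleftrightarrow> vs \<noteq> [] \<and> hd vs = S \<and> last vs = T \<and>
     (\<forall>i. Suc i < length vs \<longrightarrow> rgg_edge V r (vs!i) (vs!Suc i) \<and> preceq (vs!i) (vs!Suc i))"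

fun polygonal :: "'a::real_normed_vector list \<Rightarrow> real \<Rightarrow> 'a" where
  "polygonal [] = linepath 0 0"
| "polygonal [x] = linepath x x"
| "polygonal [x, y] = linepath x y"
| "polygonal (x # y # z # zs) = linepath x y +++ polygonal (y # z # zs)"

definition sample_space :: "nat \<Rightarrow> (nat \<Rightarrow> real^'d) measure" where
  "sample_space n = PiM {..<n} (\<lambda>_. uniform_measure lborel unit_cube)"

text \<open>Inner probability (so that events need not be shown measurable a priori).\<close>
definition inner_prob :: "'a measure \<Rightarrow> 'a set \<Rightarrow> real" where
  "inner_prob P A = Sup (measure P ` {B \<in> sets P. B \<subseteq> A})"

end

theory Submission
  imports Defs
begin

(* Along the optimal path, take the points whose coordinate sum lies k/N of the way from S to T
   and pull them slightly towards the segment from S to T: since the path is monotone, consecutive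
   points then increase by a fixed margin in every coordinate. Boxes of side a ~ 1/N at these
   points lie in a thin tube around the path, and one sample point from each box gives a monotone
   path in the graph with steps at most r_n inside that tube. A box is missed with probability
   (1 - a^d)^n; with N ~ (n / log n)^(1/d) all boxes are hit with probability 1 - O(1/n).
   Robustness turns "inside the tube" into "cost at most (1 + eps) times optimal", and a diagonal
   argument lets eps tend to 0. *)

section \<open>Uniform samples and inner probability\<close>

lemma emeasure_unit_cube: "emeasure lborel (unit_cube :: (real^'d) set) = 1"
  unfolding unit_cube_def
  by (auto simp add: emeasure_lborel_cbox_eq Basis_vec_def inner_axis intro!: prod.neutral)

lemma prob_space_uniform_unit_cube:
  "prob_space (uniform_measure lborel (unit_cube :: (real^'d) set))"
  by (rule prob_space_uniform_measure) (simp_all add: emeasure_unit_cube)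

lemma prob_space_sample_space: "prob_space (sample_space n :: (nat \<Rightarrow> real^'d) measure)"
  unfolding sample_space_def by (rule prob_space_PiM) (rule prob_space_uniform_unit_cube)

lemma space_sample_space:
  "space (sample_space n :: (nat \<Rightarrow> real^'d) measure) = PiE {..<n} (\<lambda>_. UNIV)"
  unfolding sample_space_def by (simp add: space_PiM)

lemma measure_uniform_unit_cube:
  fixes Q :: "(real^'d) set"
  assumes "Q \<in> sets borel" "Q \<subseteq> unit_cube"
  shows "measure (uniform_measure lborel unit_cube) Q = measure lborel Q"
proof -
  have "unit_cube \<in> sets (lborel :: (real^'d) measure)"
    unfolding unit_cube_def by simp
  then have "emeasure (uniform_measure lborel unit_cube) Q = emeasure lborel (unit_cube \<inter> Q)"
    using assms(1) emeasure_unit_cube[where 'd='d]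
    by (simp add: emeasure_uniform_measure divide_ennreal_def)
  then show ?thesis using assms(2) by (simp add: measure_def Int_absorb1)
qed

lemma measure_le_1_if_subset_unit_cube:
  fixes Q :: "(real^'d) set"
  assumes "Q \<in> sets borel" "Q \<subseteq> unit_cube"
  shows "measure lborel Q \<le> 1"
  using measure_uniform_unit_cube[OF assms]
    prob_space.prob_le_1[OF prob_space_uniform_unit_cube[where 'd='d]] by metis

lemma measure_sample_space_all_miss:
  fixes Q :: "(real^'d) set"
  assumes "Q \<in> sets borel" "Q \<subseteq> unit_cube"
  shows "measure (sample_space n) (PiE {..<n} (\<lambda>_. UNIV - Q)) = (1 - measure lborel Q) ^ n"
proof -
  let ?U = "uniform_measure lborel (unit_cube :: (real^'d) set)"
  interpret U: prob_space ?U by (rule prob_space_uniform_unit_cube)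
  interpret product_prob_space "\<lambda>_. ?U" "{..<n}" by unfold_locales
  interpret Pn: prob_space "sample_space n :: (nat \<Rightarrow> real^'d) measure"
    by (rule prob_space_sample_space)
  have miss: "measure ?U (UNIV - Q) = 1 - measure lborel Q"
    using U.prob_compl[of Q] assms measure_uniform_unit_cube by simp
  have "emeasure (sample_space n) (PiE {..<n} (\<lambda>_. UNIV - Q)) = (\<Prod>j<n. emeasure ?U (UNIV - Q))"
    unfolding sample_space_def using assms(1) by (subst emeasure_PiM) auto
  also have "\<dots> = ennreal (1 - measure lborel Q) ^ n"
    using miss by (simp add: U.emeasure_eq_measure)
  also have "\<dots> = ennreal ((1 - measure lborel Q) ^ n)"
    using measure_le_1_if_subset_unit_cube[OF assms] by (simp add: ennreal_power)
  finally show ?thesis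
    using measure_le_1_if_subset_unit_cube[OF assms] by (simp add: Pn.emeasure_eq_measure)
qed

lemma sets_sample_space_all_hit:
  fixes Q :: "nat \<Rightarrow> (real^'d) set"
  assumes "\<And>k. k \<in> K \<Longrightarrow> Q k \<in> sets borel" "finite K"
  shows "{\<omega> \<in> space (sample_space n). \<forall>k\<in>K. \<exists>j<n. \<omega> j \<in> Q k} \<in> sets (sample_space n)"
  unfolding sample_space_def using assms by measurable

lemma measure_sample_space_all_hit_ge:
  fixes Q :: "nat \<Rightarrow> (real^'d) set"
  assumes Q: "\<And>k. k \<in> K \<Longrightarrow> Q k \<in> sets borel" "\<And>k. k \<in> K \<Longrightarrow> Q k \<subseteq> unit_cube"
    and b: "\<And>k. k \<in> K \<Longrightarrow> b \<le> measure lborel (Q k)" and "finite K"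
  shows "1 - real (card K) * (1 - b) ^ n
    \<le> measure (sample_space n) {\<omega> \<in> space (sample_space n). \<forall>k\<in>K. \<exists>j<n. \<omega> j \<in> Q k}"
proof -
  let ?P = "sample_space n :: (nat \<Rightarrow> real^'d) measure"
  let ?B = "{\<omega> \<in> space ?P. \<forall>k\<in>K. \<exists>j<n. \<omega> j \<in> Q k}"
  interpret P: prob_space ?P by (rule prob_space_sample_space)
  define miss where "miss k = PiE {..<n} (\<lambda>_. UNIV - Q k)" for k
  have "space ?P - ?B = (\<Union>k\<in>K. miss k)"
    unfolding space_sample_space miss_def by (auto simp: PiE_iff)
  moreover have "miss k \<in> sets ?P" if "k \<in> K" for k
    unfolding miss_def sample_space_def using Q(1)[OF that] by (intro sets_PiM_I_finite) auto
  ultimately have "measure ?P (space ?P - ?B) \<le> (\<Sum>k\<in>K. measure ?P (miss k))"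
    using \<open>finite K\<close> by (auto intro!: P.finite_measure_subadditive_finite)
  also have "\<dots> \<le> (\<Sum>k\<in>K. (1 - b) ^ n)"
  proof (rule sum_mono)
    fix k assume k: "k \<in> K"
    have "0 \<le> 1 - measure lborel (Q k)"
      using measure_le_1_if_subset_unit_cube[OF Q(1,2)[OF k]] by simp
    then show "measure ?P (miss k) \<le> (1 - b) ^ n"
      unfolding miss_def measure_sample_space_all_miss[OF Q(1,2)[OF k]]
      using b[OF k] by (intro power_mono) auto
  qed
  finally show ?thesis
    using P.prob_compl[OF sets_sample_space_all_hit[OF Q(1) \<open>finite K\<close>]] by simp
qed

lemma inner_prob_ge_measure:
  assumes "prob_space P" "B \<in> sets P" "B \<subseteq> A"
  shows "measure P B \<le> inner_prob P A"
proof -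
  interpret prob_space P by fact
  show ?thesis unfolding inner_prob_def
    using assms by (intro cSup_upper bdd_aboveI[of _ 1]) auto
qed

lemma inner_prob_le_1:
  assumes "prob_space P"
  shows "inner_prob P A \<le> 1"
proof -
  interpret prob_space P by fact
  have "{} \<in> {B \<in> sets P. B \<subseteq> A}" by auto
  then show ?thesis unfolding inner_prob_def by (intro cSup_least) auto
qed

lemma tendsto_inner_prob_1:
  assumes "eventually (\<lambda>n. f n \<le> inner_prob (P n) (A n)) F" "(f \<longlongrightarrow> 1) F"
    and "\<And>n. prob_space (P n)"
  shows "((\<lambda>n. inner_prob (P n) (A n)) \<longlongrightarrow> 1) F"
proof (rule tendsto_sandwich[OF assms(1) _ assms(2) tendsto_const])
  show "eventually (\<lambda>n. inner_prob (P n) (A n) \<le> 1) F"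
    by (intro always_eventually allI inner_prob_le_1 assms(3))
qed

lemma inner_prob_mono:
  assumes "prob_space P" "A \<subseteq> A'"
  shows "inner_prob P A \<le> inner_prob P A'"
proof -
  interpret prob_space P by fact
  have "{} \<in> {B \<in> sets P. B \<subseteq> A}" by auto
  then show ?thesis unfolding inner_prob_def using assms(2)
    by (intro cSup_subset_mono) (auto intro!: bdd_aboveI[of _ 1])
qed

section \<open>Coordinate sums, level points and polygonal paths\<close>

definition coord_sum :: "real^'d \<Rightarrow> real" where
  "coord_sum x = (\<Sum>i\<in>UNIV. x $ i)"

lemma coord_sum_add [simp]: "coord_sum (x + y) = coord_sum x + coord_sum y"
  unfolding coord_sum_def by (simp add: sum.distrib)

lemma coord_sum_diff [simp]: "coord_sum (x - y) = coord_sum x - coord_sum y"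
  unfolding coord_sum_def by (simp add: sum_subtractf)

lemma coord_sum_scaleR [simp]: "coord_sum (c *\<^sub>R x) = c * coord_sum x"
  unfolding coord_sum_def by (simp add: sum_distrib_left)

lemma coord_sum_vec [simp]: "coord_sum (vec a :: real^'d) = real CARD('d) * a"
  unfolding coord_sum_def by simp

lemma dist_le_coord_sum_if_preceq:
  assumes "preceq x y"
  shows "dist x y \<le> coord_sum (y - x)"
proof -
  have "dist x y \<le> (\<Sum>i\<in>UNIV. \<bar>(y - x) $ i\<bar>)"
    unfolding dist_norm norm_minus_commute[of x] by (rule norm_le_l1_cart)
  also have "\<dots> = coord_sum (y - x)"
    using assms unfolding preceq_def coord_sum_def by (intro sum.cong) auto
  finally show ?thesis .
qed

lemma dist_le_coord_sum_if_mem_cbox: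
  assumes "x \<in> cbox p q"
  shows "dist p x \<le> coord_sum (q - p)"
proof -
  have "dist p x \<le> coord_sum (x - p)"
    using assms by (intro dist_le_coord_sum_if_preceq) (simp add: preceq_def mem_box_cart)
  also have "\<dots> \<le> coord_sum (q - p)"
    using assms unfolding coord_sum_def by (intro sum_mono) (simp add: mem_box_cart)
  finally show ?thesis .
qed

lemma dist_le_card_if_in_unit_cube:
  fixes x y :: "real^'d"
  assumes "x \<in> unit_cube" "y \<in> unit_cube"
  shows "dist x y \<le> real CARD('d)"
proof -
  have "dist x y \<le> (\<Sum>i\<in>UNIV. \<bar>(x - y) $ i\<bar>)"
    unfolding dist_norm by (rule norm_le_l1_cart)
  also have "\<dots> \<le> (\<Sum>i\<in>(UNIV :: 'd set). 1)"
  proof (intro sum_mono)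
    fix i
    have "0 \<le> x $ i" "x $ i \<le> 1" "0 \<le> y $ i" "y $ i \<le> 1"
      using assms by (auto simp: unit_cube_def mem_box_cart)
    then show "\<bar>(x - y) $ i\<bar> \<le> 1" by simp
  qed
  finally show ?thesis by simp
qed

lemma eq_if_preceq_coord_sum_le:
  assumes "preceq x y" "coord_sum y \<le> coord_sum x"
  shows "x = y"
proof (rule ccontr)
  assume "x \<noteq> y"
  then obtain i where "x $ i < y $ i"
    using assms(1) unfolding preceq_def by (metis vec_eq_iff order_less_le)
  then have "coord_sum x < coord_sum y"
    using assms(1) unfolding preceq_def coord_sum_def by (intro sum_strict_mono_ex1) auto
  then show False using assms(2) by simp
qed

lemma mono_path_preceq_if_coord_sum_le:
  assumes "mono_path \<sigma>" "a \<in> {0..1}" "b \<in> {0..1}"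
    and "coord_sum (\<sigma> a) \<le> coord_sum (\<sigma> b)"
  shows "preceq (\<sigma> a) (\<sigma> b)"
proof (cases "a \<le> b")
  case True
  then show ?thesis using assms unfolding mono_path_def by auto
next
  case False
  then have "preceq (\<sigma> b) (\<sigma> a)" using assms unfolding mono_path_def by auto
  then show ?thesis using eq_if_preceq_coord_sum_le assms(4) by (metis preceq_def order_refl)
qed

lemma path_level_points:
  fixes \<sigma> :: "real \<Rightarrow> real^'d"
  assumes "path \<sigma>" "coord_sum (\<sigma> 0) \<le> coord_sum (\<sigma> 1)" "0 < N"
  shows "\<exists>t. t 0 = 0 \<and> t N = 1 \<and> (\<forall>k\<le>N. t k \<in> {0..1} \<and>
    coord_sum (\<sigma> (t k)) = coord_sum (\<sigma> 0) + real k / real N * (coord_sum (\<sigma> 1) - coord_sum (\<sigma> 0)))"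
proof -
  let ?level = "\<lambda>k. coord_sum (\<sigma> 0) + real k / real N * (coord_sum (\<sigma> 1) - coord_sum (\<sigma> 0))"
  have "\<exists>x\<in>{0..1}. coord_sum (\<sigma> x) = ?level k" if "k \<le> N" for k
  proof -
    have "continuous_on {0..1} (\<lambda>x. coord_sum (\<sigma> x))"
      using assms(1) unfolding path_def coord_sum_def by (intro continuous_intros) auto
    moreover have "real k / real N \<le> 1" using that assms(3) by simp
    then have "?level k \<le> coord_sum (\<sigma> 1)"
      using assms(2) mult_left_le_one_le[of "coord_sum (\<sigma> 1) - coord_sum (\<sigma> 0)" "real k / real N"]
      by simp
    ultimately show ?thesis
      using IVT'[of "\<lambda>x. coord_sum (\<sigma> x)" 0 "?level k" 1] assms(2) by force
  qed
  then obtain t where t: "\<And>k. k \<le> N \<Longrightarrow> t k \<in> {0..1} \<and> coord_sum (\<sigma> (t k)) = ?level k"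
    by metis
  define t' where "t' k = (if k = 0 then 0 else if k = N then 1 else t k)" for k
  have "t' k \<in> {0..1} \<and> coord_sum (\<sigma> (t' k)) = ?level k" if "k \<le> N" for k
    using t[OF that] assms(3) unfolding t'_def by auto
  moreover have "t' 0 = 0" "t' N = 1" unfolding t'_def using assms(3) by auto
  ultimately show ?thesis by blast
qed

lemma pathstart_polygonal: "xs \<noteq> [] \<Longrightarrow> pathstart (polygonal xs) = hd xs"
  by (induction xs rule: polygonal.induct) auto

lemma pathfinish_polygonal: "xs \<noteq> [] \<Longrightarrow> pathfinish (polygonal xs) = last xs"
  by (induction xs rule: polygonal.induct) auto

lemma path_polygonal: "path (polygonal xs)"
  by (induction xs rule: polygonal.induct) (auto simp: pathstart_polygonal path_const)

lemma path_image_polygonal_subset: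
  assumes "\<And>i. Suc i < length xs \<Longrightarrow> closed_segment (xs ! i) (xs ! Suc i) \<subseteq> U"
    and "2 \<le> length xs"
  shows "path_image (polygonal xs) \<subseteq> U"
  using assms
proof (induction xs rule: polygonal.induct)
  case (4 x y z zs)
  have "closed_segment x y \<subseteq> U" using "4.prems"(1)[of 0] by simp
  moreover have "path_image (polygonal (y # z # zs)) \<subseteq> U"
    using "4.prems"(1)[of "Suc i" for i] by (intro "4.IH") auto
  ultimately show ?case
    using path_image_join_subset[of "linepath x y" "polygonal (y # z # zs)"] by auto
qed auto

lemma exists_mono_graph_path_of_chain:
  assumes "0 < N" "v 0 = S" "v N = T"
    and edge: "\<And>k. k < N \<Longrightarrow> rgg_edge V r (v k) (v (Suc k)) \<and> preceq (v k) (v (Suc k))"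
    and segment: "\<And>k. k < N \<Longrightarrow> closed_segment (v k) (v (Suc k)) \<subseteq> U"
    and "U \<subseteq> unit_cube"
  shows "\<exists>vs. mono_graph_path V r S T vs \<and> polygonal vs \<in> Sigma_paths S T \<and>
    path_image (polygonal vs) \<subseteq> U"
proof (intro exI conjI)
  let ?vs = "map v [0..<Suc N]"
  have nth: "?vs ! k = v k" if "k \<le> N" for k
    using that by (simp del: upt_Suc add: nth_map_upt)
  have ends: "?vs \<noteq> []" "hd ?vs = S" "last ?vs = T"
    using assms(1-3) by (simp_all del: upt_Suc add: hd_map last_map)
  show "mono_graph_path V r S T ?vs"
    unfolding mono_graph_path_def using ends edge nth by auto
  show image: "path_image (polygonal ?vs) \<subseteq> U"
    using segment nth \<open>0 < N\<close> by (intro path_image_polygonal_subset) auto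
  show "polygonal ?vs \<in> Sigma_paths S T"
    unfolding Sigma_paths_def using ends image \<open>U \<subseteq> unit_cube\<close>
    by (simp add: path_polygonal pathstart_polygonal pathfinish_polygonal)
qed

section \<open>A grid of boxes along a monotone path\<close>

definition graph_path_event ::
  "nat \<Rightarrow> real \<Rightarrow> real^'d \<Rightarrow> real^'d \<Rightarrow> ((real \<Rightarrow> real^'d) \<Rightarrow> bool) \<Rightarrow> (nat \<Rightarrow> real^'d) set" where
  "graph_path_event n r S T P = {\<omega> \<in> space (sample_space n). \<exists>vs.
     mono_graph_path (\<omega> ` {..<n} \<union> {S, T}) r S T vs \<and> polygonal vs \<in> Sigma_paths S T \<and>
     P (polygonal vs)}"

lemma graph_path_event_mono:
  "(\<And>\<gamma>. \<gamma> \<in> Sigma_paths S T \<Longrightarrow> P \<gamma> \<Longrightarrow> Q \<gamma>) \<Longrightarrow>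
    graph_path_event n r S T P \<subseteq> graph_path_event n r S T Q"
  unfolding graph_path_event_def by blast

locale level_grid =
  fixes \<sigma> :: "real \<Rightarrow> real^'d" and S T :: "real^'d" and \<delta>'' :: real
    and N :: nat and t :: "nat \<Rightarrow> real" and lm :: real
  assumes mono: "mono_path \<sigma>" and image_in_cube: "path_image \<sigma> \<subseteq> unit_cube"
    and start: "\<sigma> 0 = S" and finish: "\<sigma> 1 = T"
    and gap: "\<And>i. \<delta>'' \<le> T $ i - S $ i" and gap_pos: "0 < \<delta>''"
    and N_pos: "0 < N" and t_0: "t 0 = 0" and t_N: "t N = 1"
    and t_in: "\<And>k. k \<le> N \<Longrightarrow> t k \<in> {0..1}"
    and t_level: "\<And>k. k \<le> N \<Longrightarrow>
      coord_sum (\<sigma> (t k)) = coord_sum S + real k / real N * coord_sum (T - S)"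
    and lm_pos: "0 < lm" and lm_le_1: "lm \<le> 1"
begin

lemma level_point_in_cube: "k \<le> N \<Longrightarrow> \<sigma> (t k) \<in> unit_cube"
  using image_in_cube t_in unfolding path_image_def by auto

lemma S_in_cube: "S \<in> unit_cube"
  using level_point_in_cube[of 0] t_0 start by simp

lemma T_in_cube: "T \<in> unit_cube"
  using level_point_in_cube[of N] t_N finish by simp

lemma gap_le_1: "\<delta>'' \<le> 1"
proof -
  obtain i :: 'd where True by blast
  have "S $ i \<ge> 0" "T $ i \<le> 1"
    using S_in_cube T_in_cube by (auto simp: unit_cube_def mem_box_cart)
  then show ?thesis using gap[of i] by simp
qed

lemma coord_sum_T_minus_S: "0 \<le> coord_sum (T - S)" "coord_sum (T - S) \<le> real CARD('d)"
proof -
  have cube: "0 \<le> S $ i" "T $ i \<le> 1" for i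
    using S_in_cube T_in_cube by (auto simp: unit_cube_def mem_box_cart)
  have "0 \<le> T $ i - S $ i" "T $ i - S $ i \<le> 1" for i
    using cube[of i] gap[of i] gap_pos by linarith+
  then show "0 \<le> coord_sum (T - S)" "coord_sum (T - S) \<le> real CARD('d)"
    using sum_mono[of UNIV "\<lambda>i. T $ i - S $ i" "\<lambda>_. 1"]
    unfolding coord_sum_def by (auto intro: sum_nonneg)
qed

lemma coord_sum_level_step:
  "k < N \<Longrightarrow> coord_sum (\<sigma> (t (Suc k)) - \<sigma> (t k)) = coord_sum (T - S) / N"
  using t_level[of k] t_level[of "Suc k"] by (simp add: field_simps)

lemma level_points_preceq:
  assumes "k < N"
  shows "preceq (\<sigma> (t k)) (\<sigma> (t (Suc k)))"
proof (rule mono_path_preceq_if_coord_sum_le[OF mono t_in t_in])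
  have "0 \<le> coord_sum (\<sigma> (t (Suc k)) - \<sigma> (t k))"
    unfolding coord_sum_level_step[OF assms] using coord_sum_T_minus_S(1) by simp
  then show "coord_sum (\<sigma> (t k)) \<le> coord_sum (\<sigma> (t (Suc k)))" by simp
qed (use assms in auto)

text \<open>Pulling the level points of \<open>\<sigma>\<close> towards the segment from \<open>S\<close> to \<open>T\<close> makes
  consecutive grid points increase strictly in every coordinate.\<close>

definition grid_point :: "nat \<Rightarrow> real^'d" where
  "grid_point k = (1 - lm) *\<^sub>R \<sigma> (t k) + lm *\<^sub>R (S + (real k / real N) *\<^sub>R (T - S))"

lemma grid_point_0: "grid_point 0 = S"
  unfolding grid_point_def t_0 start by (simp add: algebra_simps)

lemma grid_point_N: "grid_point N = T"
  unfolding grid_point_def t_N finish using N_pos by (simp add: algebra_simps)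

lemma grid_point_step:
  "grid_point (Suc k) - grid_point k
     = (1 - lm) *\<^sub>R (\<sigma> (t (Suc k)) - \<sigma> (t k)) + (lm / N) *\<^sub>R (T - S)"
  using N_pos by (simp add: vec_eq_iff grid_point_def field_simps)

lemma grid_point_gap:
  assumes "k < N"
  shows "lm * \<delta>'' / N \<le> (grid_point (Suc k) - grid_point k) $ i"
proof -
  have "0 \<le> (1 - lm) * (\<sigma> (t (Suc k)) - \<sigma> (t k)) $ i"
    using level_points_preceq[OF assms] lm_le_1 unfolding preceq_def by simp
  moreover have "lm * \<delta>'' / N \<le> lm / N * (T - S) $ i"
    using gap[of i] lm_pos by (simp add: divide_right_mono mult_left_mono)
  ultimately show ?thesis unfolding grid_point_step by simp
qed

lemma dist_grid_point_step:
  assumes "k < N"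
  shows "dist (grid_point k) (grid_point (Suc k)) \<le> coord_sum (T - S) / N"
proof -
  have gap_nonneg: "0 \<le> lm * \<delta>'' / N"
    using lm_pos gap_pos by simp
  have "preceq (grid_point k) (grid_point (Suc k))"
    using order_trans[OF gap_nonneg grid_point_gap[OF assms]] unfolding preceq_def by simp
  then have "dist (grid_point k) (grid_point (Suc k)) \<le> coord_sum (grid_point (Suc k) - grid_point k)"
    by (rule dist_le_coord_sum_if_preceq)
  also have "\<dots> = (1 - lm) * (coord_sum (T - S) / N) + lm / N * coord_sum (T - S)"
    by (simp only: grid_point_step coord_sum_add coord_sum_scaleR coord_sum_level_step[OF assms])
  also have "\<dots> = coord_sum (T - S) / N"
    using N_pos by (simp add: field_simps)
  finally show ?thesis .
qed

lemma dist_grid_point_level_point: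
  assumes "k \<le> N"
  shows "dist (grid_point k) (\<sigma> (t k)) \<le> lm * real CARD('d)"
proof -
  let ?u = "real k / real N"
  have "S + ?u *\<^sub>R (T - S) \<in> closed_segment S T"
    using assms N_pos unfolding in_segment by (intro exI[of _ ?u]) (simp add: algebra_simps)
  also have "\<dots> \<subseteq> unit_cube"
    using S_in_cube T_in_cube unfolding unit_cube_def by (intro closed_segment_subset convex_box)
  finally have "dist (S + ?u *\<^sub>R (T - S)) (\<sigma> (t k)) \<le> real CARD('d)"
    using level_point_in_cube[OF assms] by (rule dist_le_card_if_in_unit_cube)
  moreover have "grid_point k - \<sigma> (t k) = lm *\<^sub>R (S + ?u *\<^sub>R (T - S) - \<sigma> (t k))"
    by (simp add: vec_eq_iff grid_point_def algebra_simps)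
  then have "dist (grid_point k) (\<sigma> (t k)) = lm * dist (S + ?u *\<^sub>R (T - S)) (\<sigma> (t k))"
    unfolding dist_norm using lm_pos by simp
  ultimately show ?thesis using lm_pos by (simp add: mult_left_mono)
qed

definition grid_box :: "real \<Rightarrow> nat \<Rightarrow> (real^'d) set" where
  "grid_box a k = cbox (grid_point k) (grid_point k + vec a)"

lemma grid_box_borel: "grid_box a k \<in> sets borel"
  unfolding grid_box_def by simp

lemma measure_grid_box:
  assumes "0 \<le> a"
  shows "measure lborel (grid_box a k) = a ^ CARD('d)"
proof -
  have "grid_point k \<in> grid_box a k"
    unfolding grid_box_def using assms by (simp add: mem_box_cart)
  then show ?thesis
    unfolding grid_box_def by (subst content_cbox_cart) auto
qed

lemma dist_grid_box: "x \<in> grid_box a k \<Longrightarrow> dist (grid_point k) x \<le> real CARD('d) * a"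
  unfolding grid_box_def using dist_le_coord_sum_if_mem_cbox by fastforce

lemma grid_boxes_increase:
  assumes "k < N" "a < lm * \<delta>'' / N" "x \<in> grid_box a k" "y \<in> grid_box a (Suc k)"
  shows "x $ i < y $ i"
proof -
  have "x $ i \<le> grid_point k $ i + a" "grid_point (Suc k) $ i \<le> y $ i"
    using assms(3,4) unfolding grid_box_def by (simp_all add: mem_box_cart)
  then show ?thesis
    using grid_point_gap[OF assms(1), of i] assms(2) by simp
qed

lemma dist_grid_boxes_step:
  assumes "k < N" "x \<in> grid_box a k" "y \<in> grid_box a (Suc k)"
  shows "dist x y \<le> coord_sum (T - S) / N + 2 * real CARD('d) * a"
  using dist_grid_box[OF assms(2)] dist_grid_box[OF assms(3)] dist_grid_point_step[OF assms(1)]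
    dist_triangle[of x y "grid_point k"] dist_triangle[of "grid_point k" y "grid_point (Suc k)"]
  by (simp add: dist_commute)

lemma dist_grid_box_level_point:
  assumes "k \<le> N" "x \<in> grid_box a k"
  shows "dist (\<sigma> (t k)) x \<le> real CARD('d) * a + lm * real CARD('d)"
  using dist_grid_box[OF assms(2)] dist_grid_point_level_point[OF assms(1)]
    dist_triangle[of "\<sigma> (t k)" x "grid_point k"]
  by (simp add: dist_commute)

lemma grid_box_subset_tube:
  assumes "k \<le> N" "real CARD('d) * a + lm * real CARD('d) < \<delta>"
  shows "grid_box a k \<subseteq> tube \<delta> \<sigma>"
  using dist_grid_box_level_point[OF assms(1)] assms(2) t_in[OF assms(1)]
  unfolding tube_def by fastforce

lemma closed_segment_grid_boxes_subset_tube: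
  assumes "k < N" "x \<in> grid_box a k" "y \<in> grid_box a (Suc k)" "0 \<le> a"
    and close: "coord_sum (T - S) / N + 3 * real CARD('d) * a + lm * real CARD('d) < \<delta>"
  shows "closed_segment x y \<subseteq> tube \<delta> \<sigma>"
proof -
  have "0 \<le> coord_sum (T - S) / N" "0 \<le> real CARD('d) * a"
    using coord_sum_T_minus_S(1) assms(4) by simp_all
  then have "dist (\<sigma> (t k)) x < \<delta>" "dist (\<sigma> (t k)) y < \<delta>"
    using dist_grid_box_level_point[OF _ assms(2)] dist_grid_boxes_step[OF assms(1-3)]
      dist_triangle[of "\<sigma> (t k)" y x] assms(1) close
    by linarith+
  then have "closed_segment x y \<subseteq> ball (\<sigma> (t k)) \<delta>"
    by (intro closed_segment_subset convex_ball) auto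
  then show ?thesis using t_in[of k] assms(1) unfolding tube_def by auto
qed

lemma rgg_edge_grid_boxes:
  assumes "k < N" "a < lm * \<delta>'' / N" "x \<in> grid_box a k" "y \<in> grid_box a (Suc k)"
    and "x \<in> V" "y \<in> V"
    and step: "coord_sum (T - S) / N + 2 * real CARD('d) * a \<le> r"
  shows "rgg_edge V r x y \<and> preceq x y"
proof -
  have "x $ i < y $ i" for i
    using grid_boxes_increase[OF assms(1-4)] .
  then have "x \<noteq> y" "preceq x y"
    unfolding preceq_def by (auto simp: less_imp_le)
  then show ?thesis
    using assms(5,6) dist_grid_boxes_step[OF assms(1,3,4)] step unfolding rgg_edge_def by auto
qed

lemma exists_graph_path_through_grid_boxes:
  fixes a :: real
  assumes a: "0 \<le> a" "a < lm * \<delta>'' / N"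
    and hit: "\<forall>k\<in>{1..<N}. \<exists>j<n. \<omega> j \<in> grid_box a k"
    and step: "coord_sum (T - S) / N + 2 * real CARD('d) * a \<le> r"
    and close: "coord_sum (T - S) / N + 3 * real CARD('d) * a + lm * real CARD('d) < \<delta>"
    and tube_in_cube: "tube \<delta> \<sigma> \<subseteq> unit_cube"
  shows "\<exists>vs. mono_graph_path (\<omega> ` {..<n} \<union> {S, T}) r S T vs \<and>
    polygonal vs \<in> Sigma_paths S T \<and> path_image (polygonal vs) \<subseteq> tube \<delta> \<sigma>"
proof -
  define V where "V = \<omega> ` {..<n} \<union> {S, T}"
  define v where
    "v k = (if k = 0 then S else if k = N then T else \<omega> (SOME j. j < n \<and> \<omega> j \<in> grid_box a k))" for k
  have v: "v k \<in> grid_box a k \<and> v k \<in> V" if "k \<le> N" for k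
  proof (cases "k = 0 \<or> k = N")
    case True
    then show ?thesis
      using a(1) grid_point_0 grid_point_N unfolding v_def V_def grid_box_def
      by (auto simp: mem_box_cart)
  next
    case False
    then have "\<exists>j. j < n \<and> \<omega> j \<in> grid_box a k" using hit that by auto
    then show ?thesis
      using someI_ex[of "\<lambda>j. j < n \<and> \<omega> j \<in> grid_box a k"] False unfolding v_def V_def by auto
  qed
  have "closed_segment (v k) (v (Suc k)) \<subseteq> tube \<delta> \<sigma>" if "k < N" for k
    using that v[of k] v[of "Suc k"] a(1) close
    by (intro closed_segment_grid_boxes_subset_tube[OF that]) auto
  moreover have "rgg_edge V r (v k) (v (Suc k)) \<and> preceq (v k) (v (Suc k))" if "k < N" for k
    using that v[of k] v[of "Suc k"] a(2) step
    by (intro rgg_edge_grid_boxes[OF that]) auto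
  moreover have "v 0 = S" "v N = T" unfolding v_def using N_pos by auto
  ultimately show ?thesis
    using exists_mono_graph_path_of_chain[OF N_pos _ _ _ _ tube_in_cube] unfolding V_def by blast
qed

lemma prob_graph_path_through_grid_boxes_ge:
  fixes a :: real
  assumes a: "0 \<le> a" "a < lm * \<delta>'' / N"
    and step: "coord_sum (T - S) / N + 2 * real CARD('d) * a \<le> r"
    and close: "coord_sum (T - S) / N + 3 * real CARD('d) * a + lm * real CARD('d) < \<delta>"
    and tube_in_cube: "tube \<delta> \<sigma> \<subseteq> unit_cube"
  shows "1 - real N * (1 - a ^ CARD('d)) ^ n
    \<le> inner_prob (sample_space n) (graph_path_event n r S T (\<lambda>\<gamma>. path_image \<gamma> \<subseteq> tube \<delta> \<sigma>))"
proof -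
  let ?hit = "{\<omega> \<in> space (sample_space n). \<forall>k\<in>{1..<N}. \<exists>j<n. \<omega> j \<in> grid_box a k}"
  have "x / N \<le> x" if "0 \<le> x" for x
    using that N_pos by (simp add: mult_imp_div_pos_le mult_le_cancel_left1)
  then have "lm * \<delta>'' / N \<le> lm * \<delta>''"
    using lm_pos gap_pos by simp
  also have "\<dots> \<le> 1"
    using lm_pos lm_le_1 gap_pos gap_le_1 by (simp add: mult_le_one)
  finally have "a \<le> 1"
    using a(2) by simp
  then have "a ^ CARD('d) \<le> 1"
    using a(1) by (simp add: power_le_one)
  then have "real N * (1 - a ^ CARD('d)) ^ n \<ge> real (card {1..<N}) * (1 - a ^ CARD('d)) ^ n"
    by (intro mult_right_mono) auto
  moreover have "1 - real (card {1..<N}) * (1 - a ^ CARD('d)) ^ n \<le> measure (sample_space n) ?hit"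
  proof (rule measure_sample_space_all_hit_ge)
    have "0 \<le> coord_sum (T - S) / N" "0 \<le> real CARD('d) * a"
      using coord_sum_T_minus_S(1) a(1) by simp_all
    then have "real CARD('d) * a + lm * real CARD('d) < \<delta>"
      using close by linarith
    then show "grid_box a k \<subseteq> unit_cube" if "k \<in> {1..<N}" for k
      using grid_box_subset_tube[of k a \<delta>] that tube_in_cube by auto
  qed (simp_all add: measure_grid_box[OF a(1)] grid_box_borel)
  moreover have "?hit \<subseteq> graph_path_event n r S T (\<lambda>\<gamma>. path_image \<gamma> \<subseteq> tube \<delta> \<sigma>)"
    unfolding graph_path_event_def
    using exists_graph_path_through_grid_boxes[OF a _ step close tube_in_cube] by auto
  then have "measure (sample_space n) ?hit
      \<le> inner_prob (sample_space n) (graph_path_event n r S T (\<lambda>\<gamma>. path_image \<gamma> \<subseteq> tube \<delta> \<sigma>))"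
    by (intro inner_prob_ge_measure prob_space_sample_space sets_sample_space_all_hit)
      (simp_all add: grid_box_borel)
  ultimately show ?thesis by linarith
qed

end

lemma prob_graph_path_in_tube_ge_grid:
  fixes \<sigma> :: "real \<Rightarrow> real^'d" and lm \<delta> \<delta>'' r :: real
  assumes \<sigma>: "\<sigma> \<in> Sigma_paths S T" "mono_path \<sigma>"
    and gap: "\<And>i. \<delta>'' \<le> T $ i - S $ i" "0 < \<delta>''"
    and tube_in_cube: "tube \<delta> \<sigma> \<subseteq> unit_cube"
    and lm: "0 < lm" "lm \<le> 1" "lm * real CARD('d) \<le> \<delta> / 4"
    and N: "0 < N" "3 * real CARD('d) / real N \<le> r" "3 * real CARD('d) / real N \<le> \<delta> / 2"
  shows "1 - real N * (1 - (lm * \<delta>'' / (2 * real N)) ^ CARD('d)) ^ n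
    \<le> inner_prob (sample_space n) (graph_path_event n r S T (\<lambda>\<gamma>. path_image \<gamma> \<subseteq> tube \<delta> \<sigma>))"
proof -
  have ends: "path \<sigma>" "path_image \<sigma> \<subseteq> unit_cube" "\<sigma> 0 = S" "\<sigma> 1 = T"
    using \<sigma>(1) unfolding Sigma_paths_def pathstart_def pathfinish_def by auto
  have "S $ i \<le> T $ i" for i
    using gap(1)[of i] gap(2) by linarith
  then have "coord_sum S \<le> coord_sum T"
    unfolding coord_sum_def by (intro sum_mono)
  then obtain t where "t 0 = 0" "t N = 1" "\<forall>k\<le>N. t k \<in> {0..1} \<and>
      coord_sum (\<sigma> (t k)) = coord_sum S + real k / real N * (coord_sum T - coord_sum S)"
    using path_level_points[OF ends(1) _ N(1)] ends by auto
  then interpret level_grid \<sigma> S T \<delta>'' N t lm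
    using \<sigma>(2) ends gap lm N(1) by unfold_locales auto
  define q where "q = real CARD('d) / N"
  define a where "a = lm * \<delta>'' / (2 * real N)"
  have q: "0 < q" "3 * q \<le> r" "3 * q \<le> \<delta> / 2"
    unfolding q_def using N by simp_all
  have "lm * \<delta>'' \<le> 1"
    using lm gap_pos gap_le_1 by (simp add: mult_le_one)
  then have Da: "real CARD('d) * a \<le> q / 2"
    unfolding a_def q_def using mult_right_mono[of "lm * \<delta>''" 1 "real CARD('d) / (2 * N)"]
    by (simp add: field_simps)
  have L: "coord_sum (T - S) / N \<le> q"
    unfolding q_def using coord_sum_T_minus_S(2) by (simp add: divide_right_mono)
  have a: "0 \<le> a" "a < lm * \<delta>'' / N"
    unfolding a_def using lm(1) gap_pos N(1) by (simp_all add: field_simps)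
  have "1 - real N * (1 - a ^ CARD('d)) ^ n
      \<le> inner_prob (sample_space n) (graph_path_event n r S T (\<lambda>\<gamma>. path_image \<gamma> \<subseteq> tube \<delta> \<sigma>))"
  proof (rule prob_graph_path_through_grid_boxes_ge[OF a _ _ tube_in_cube])
    show "coord_sum (T - S) / N + 2 * real CARD('d) * a \<le> r"
      using q L Da by linarith
    show "coord_sum (T - S) / N + 3 * real CARD('d) * a + lm * real CARD('d) < \<delta>"
      using q L Da lm(3) by linarith
  qed
  then show ?thesis unfolding a_def .
qed

section \<open>Asymptotics\<close>

lemma one_minus_power_le_inverse_square:
  fixes x :: real
  assumes "0 \<le> x" "x \<le> 1" "0 < n" "2 * ln (real n) / real n \<le> x"
  shows "(1 - x) ^ n \<le> 1 / (real n)\<^sup>2"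
proof -
  have "(1 - x) ^ n \<le> exp (- x) ^ n"
    using assms(1,2) exp_ge_add_one_self[of "- x"] by (intro power_mono) auto
  also have "\<dots> = exp (- (real n * x))"
    by (simp add: exp_of_nat_mult[symmetric])
  also have "\<dots> \<le> exp (- (2 * ln (real n)))"
    using assms(3,4) by (simp add: pos_divide_le_eq mult.commute)
  also have "\<dots> = 1 / (real n)\<^sup>2"
    using exp_of_nat_mult[of 2 "ln (real n)"] assms(3) by (simp add: exp_minus inverse_eq_divide)
  finally show ?thesis .
qed

lemma power_mult_le_self:
  fixes c x :: real
  assumes "0 \<le> c" "c \<le> 1" "0 \<le> x" "x \<le> 1" "1 \<le> d"
  shows "(c * x) ^ d \<le> x"
proof -
  have "c * x \<le> x"
    using assms by (intro mult_left_le_one_le) auto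
  moreover have "(c * x) ^ d \<le> c * x"
    using power_decreasing[of 1 d "c * x"] assms \<open>c * x \<le> x\<close> by simp
  ultimately show ?thesis by linarith
qed

lemma grid_failure_le:
  fixes d n N :: nat and b \<rho> :: real
  assumes d: "1 \<le> d" and n: "3 \<le> n" and b: "0 < b" "b \<le> 1" and \<rho>: "0 < \<rho>" "\<rho> \<le> 1"
    and N: "N = nat \<lceil>3 * real d / \<rho>\<rceil>"
    and \<rho>_large: "ln (real n) / real n \<le> (b * \<rho> / (24 * real d)) ^ d"
  shows "real N * (1 - (b / (2 * real N)) ^ d) ^ n \<le> 6 * real d / real n"
proof -
  define a where "a = b / (2 * real N)"
  have "3 \<le> 3 * real d / \<rho>" using d \<rho> by (simp add: field_simps)
  then have N_ge: "3 \<le> real N" and N_le: "N \<le> 6 * real d / \<rho>"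
    unfolding N by linarith+
  have "b * \<rho> / (12 * real d) = b / (2 * (6 * real d / \<rho>))"
    using \<rho> by simp
  also have "\<dots> \<le> a"
    unfolding a_def using N_le N_ge b \<rho> d by (intro divide_left_mono) auto
  finally have a_ge: "b * \<rho> / (12 * real d) \<le> a" .
  have a: "0 \<le> a" "a \<le> 1"
    unfolding a_def using N_ge b by (simp_all add: divide_le_eq)
  have "exp 1 \<le> real n"
    using exp_le n by linarith
  then have ln_ge: "1 \<le> ln (real n)"
    using n by (simp add: ln_ge_iff)
  have "2 * (ln (real n) / real n) \<le> 2 ^ d * (b * \<rho> / (24 * real d)) ^ d"
    using \<rho>_large d ln_ge by (intro mult_mono) (auto simp: self_le_power)
  also have "\<dots> = (b * \<rho> / (12 * real d)) ^ d"
    by (simp add: ac_simps flip: power_mult_distrib)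
  also have "\<dots> \<le> a ^ d"
    using a_ge b \<rho> by (intro power_mono) auto
  finally have failure: "(1 - a ^ d) ^ n \<le> 1 / (real n)\<^sup>2"
    using n a by (intro one_minus_power_le_inverse_square) (auto simp: power_le_one)
  have "1 / real n \<le> ln (real n) / real n"
    using ln_ge by (simp add: divide_right_mono)
  also have "\<dots> \<le> \<rho>"
    using \<rho>_large power_mult_le_self[of "b / (24 * real d)" \<rho> d] b \<rho> d by simp
  finally have "1 \<le> \<rho> * real n"
    using n by (simp add: field_simps)
  then have "6 * real d \<le> 6 * real d * (\<rho> * real n)"
    using mult_left_mono[of 1 "\<rho> * real n" "6 * real d"] by simp
  then have "6 * real d / \<rho> \<le> 6 * real d * real n"
    using \<rho> by (simp add: divide_le_eq ac_simps)
  then have "real N * (1 - a ^ d) ^ n \<le> 6 * real d * real n * (1 / (real n)\<^sup>2)"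
    using N_le failure a by (intro mult_mono) (auto simp: power_le_one)
  then show ?thesis
    unfolding a_def using n by (simp add: power2_eq_square)
qed

lemma prob_graph_path_in_tube_ge:
  fixes \<sigma> :: "real \<Rightarrow> real^'d" and lm \<rho> \<delta> \<delta>'' r :: real
  assumes \<sigma>: "\<sigma> \<in> Sigma_paths S T" "mono_path \<sigma>"
    and gap: "\<And>i. \<delta>'' \<le> T $ i - S $ i" "0 < \<delta>''" "\<delta>'' \<le> 1"
    and tube_in_cube: "tube \<delta> \<sigma> \<subseteq> unit_cube"
    and lm: "0 < lm" "lm \<le> 1" "lm * real CARD('d) \<le> \<delta> / 4"
    and n: "3 \<le> n"
    and \<rho>: "0 < \<rho>" "\<rho> \<le> r" "\<rho> \<le> 1" "\<rho> \<le> \<delta> / 2"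
    and \<rho>_large: "ln (real n) / real n \<le> (lm * \<delta>'' * \<rho> / (24 * real CARD('d))) ^ CARD('d)"
  shows "1 - 6 * real CARD('d) / real n
    \<le> inner_prob (sample_space n) (graph_path_event n r S T (\<lambda>\<gamma>. path_image \<gamma> \<subseteq> tube \<delta> \<sigma>))"
proof -
  define N where "N = nat \<lceil>3 * real CARD('d) / \<rho>\<rceil>"
  have "0 < 3 * real CARD('d) / \<rho>" using \<rho>(1) by simp
  moreover have N_ge: "3 * real CARD('d) / \<rho> \<le> N" unfolding N_def by linarith
  ultimately have "0 < real N" by linarith
  moreover have "3 * real CARD('d) / N \<le> \<rho>"
    using N_ge \<rho>(1) \<open>0 < real N\<close> by (simp add: pos_divide_le_eq mult.commute)
  ultimately have N: "0 < N" "3 * real CARD('d) / N \<le> r" "3 * real CARD('d) / N \<le> \<delta> / 2"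
    using \<rho> by simp_all
  have "0 < lm * \<delta>''" "lm * \<delta>'' \<le> 1"
    using lm gap(2,3) by (simp_all add: mult_le_one)
  then have "real N * (1 - (lm * \<delta>'' / (2 * real N)) ^ CARD('d)) ^ n \<le> 6 * real CARD('d) / n"
    using n \<rho>(1,3) \<rho>_large N_def by (intro grid_failure_le) auto
  moreover have "1 - real N * (1 - (lm * \<delta>'' / (2 * real N)) ^ CARD('d)) ^ n
    \<le> inner_prob (sample_space n) (graph_path_event n r S T (\<lambda>\<gamma>. path_image \<gamma> \<subseteq> tube \<delta> \<sigma>))"
    using prob_graph_path_in_tube_ge_grid[OF \<sigma> gap(1,2) tube_in_cube lm N] .
  ultimately show ?thesis by linarith
qed

lemma tendsto_prob_graph_path_in_tube:
  fixes \<sigma> :: "real \<Rightarrow> real^'d" and r :: "nat \<Rightarrow> real"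
  assumes \<sigma>: "\<sigma> \<in> Sigma_paths S T" "mono_path \<sigma>"
    and gap: "\<And>i. \<delta>'' \<le> T $ i - S $ i" "0 < \<delta>''" "\<delta>'' \<le> 1"
    and \<delta>: "0 < \<delta>" "tube \<delta> \<sigma> \<subseteq> unit_cube"
    and r: "filterlim (\<lambda>n. r n / (ln (real n) / real n) powr (1 / real CARD('d))) at_top at_top"
  shows "(\<lambda>n. inner_prob (sample_space n)
     (graph_path_event n (r n) S T (\<lambda>\<gamma>. path_image \<gamma> \<subseteq> tube \<delta> \<sigma>))) \<longlonglongrightarrow> 1"
proof -
  define D where "D = real CARD('d)"
  define lm where "lm = min 1 (\<delta> / (4 * D))"
  define y where "y n = (ln (real n) / real n) powr (1 / D)" for n :: nat
  \<comment> \<open>With this scale every grid box is at least \<open>2 * y n\<close> wide.\<close>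
  define \<rho> where "\<rho> n = 24 * D / (lm * \<delta>'') * y n" for n
  have D: "1 \<le> D" unfolding D_def by simp
  have lm: "0 < lm" "lm \<le> 1" "lm * D \<le> \<delta> / 4"
    unfolding lm_def using \<delta>(1) D by (auto simp: min_def field_simps)
  have "(\<lambda>n. ln (real n) / real n) \<longlonglongrightarrow> 0"
    using filterlim_compose[OF ln_x_over_x_tendsto_0 filterlim_real_sequentially] by simp
  then have "y \<longlonglongrightarrow> 0"
    unfolding y_def using D by (intro tendsto_zero_powrI eventually_sequentiallyI[of 1]) auto
  then have "\<rho> \<longlonglongrightarrow> 0"
    unfolding \<rho>_def using tendsto_mult_right_zero by blast
  moreover have "0 < min 1 (\<delta> / 2)" using \<delta>(1) by simp
  ultimately have "eventually (\<lambda>n. \<rho> n < min 1 (\<delta> / 2)) sequentially"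
    by (rule order_tendstoD(2))
  moreover have "eventually (\<lambda>n. 24 * D / (lm * \<delta>'') \<le> r n / y n) sequentially"
    using r unfolding filterlim_at_top y_def D_def by blast
  ultimately have "eventually (\<lambda>n. 1 - 6 * D / n \<le> inner_prob (sample_space n)
      (graph_path_event n (r n) S T (\<lambda>\<gamma>. path_image \<gamma> \<subseteq> tube \<delta> \<sigma>))) sequentially"
    using eventually_ge_at_top[of 3]
  proof eventually_elim
    case (elim n)
    have y: "0 < y n" "y n ^ CARD('d) = ln (real n) / real n"
      unfolding y_def D_def using elim(3) by (auto simp: powr_realpow[symmetric] powr_powr)
    have "0 < \<rho> n"
      unfolding \<rho>_def using y(1) lm(1) gap(2) D by simp
    moreover have "\<rho> n \<le> r n"
      unfolding \<rho>_def using elim(2) y(1) by (simp add: pos_le_divide_eq)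
    moreover have "lm * \<delta>'' * \<rho> n / (24 * D) = y n"
      unfolding \<rho>_def using lm(1) gap(2) D by simp
    ultimately show ?case
      using elim(1,3) y(2) unfolding D_def
      by (intro prob_graph_path_in_tube_ge[OF \<sigma> gap \<delta>(2) lm[unfolded D_def]]) auto
  qed
  moreover have "(\<lambda>n. 1 - 6 * D / real n) \<longlonglongrightarrow> 1"
    using tendsto_diff[OF tendsto_const lim_const_over_n[of "6 * D"]] by simp
  ultimately show ?thesis
    using prob_space_sample_space by (rule tendsto_inner_prob_1)
qed

lemma tendsto_prob_graph_path_near_optimal:
  fixes \<sigma> :: "real \<Rightarrow> real^'d" and r :: "nat \<Rightarrow> real"
  assumes \<sigma>: "robust M S T \<sigma>" "mono_path \<sigma>"
    and \<delta>': "0 < \<delta>'" "tube \<delta>' \<sigma> \<subseteq> unit_cube"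
    and gap: "\<And>i. \<delta>'' \<le> T $ i - S $ i" "0 < \<delta>''" "\<delta>'' \<le> 1"
    and r: "filterlim (\<lambda>n. r n / (ln (real n) / real n) powr (1 / real CARD('d))) at_top at_top"
    and "0 < \<epsilon>"
  shows "(\<lambda>n. inner_prob (sample_space n)
     (graph_path_event n (r n) S T (\<lambda>\<gamma>. bcost M \<gamma> \<le> ereal (1 + \<epsilon>) * bcost M \<sigma>))) \<longlonglongrightarrow> 1"
proof -
  obtain \<delta> where \<delta>: "0 < \<delta>" and near: "\<And>\<gamma>. \<gamma> \<in> Sigma_paths S T \<Longrightarrow>
      path_image \<gamma> \<subseteq> tube \<delta> \<sigma> \<Longrightarrow> bcost M \<gamma> \<le> ereal (1 + \<epsilon>) * bcost M \<sigma>"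
    using \<sigma>(1) \<open>0 < \<epsilon>\<close> unfolding robust_def by blast
  define \<delta>0 where "\<delta>0 = min \<delta> \<delta>'"
  have tube_\<delta>0: "tube \<delta>0 \<sigma> \<subseteq> tube \<delta> \<sigma>" "tube \<delta>0 \<sigma> \<subseteq> tube \<delta>' \<sigma>"
    unfolding \<delta>0_def tube_def by auto
  have "\<sigma> \<in> Sigma_paths S T" using \<sigma>(1) unfolding robust_def by blast
  moreover have "0 < \<delta>0" unfolding \<delta>0_def using \<delta> \<delta>'(1) by simp
  ultimately have lim: "(\<lambda>n. inner_prob (sample_space n)
      (graph_path_event n (r n) S T (\<lambda>\<gamma>. path_image \<gamma> \<subseteq> tube \<delta>0 \<sigma>))) \<longlonglongrightarrow> 1"
    using tendsto_prob_graph_path_in_tube[OF _ \<sigma>(2) gap _ order_trans[OF tube_\<delta>0(2) \<delta>'(2)] r]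
    by blast
  have "inner_prob (sample_space n)
      (graph_path_event n (r n) S T (\<lambda>\<gamma>. path_image \<gamma> \<subseteq> tube \<delta>0 \<sigma>))
    \<le> inner_prob (sample_space n)
      (graph_path_event n (r n) S T (\<lambda>\<gamma>. bcost M \<gamma> \<le> ereal (1 + \<epsilon>) * bcost M \<sigma>))" for n
    using near tube_\<delta>0(1)
    by (intro inner_prob_mono prob_space_sample_space graph_path_event_mono) blast
  then show ?thesis
    using lim prob_space_sample_space by (intro tendsto_inner_prob_1 always_eventually allI)
qed

lemma diagonal_sequence_tendsto_1:
  fixes g :: "nat \<Rightarrow> nat \<Rightarrow> real"
  assumes lim: "\<And>m. g m \<longlonglongrightarrow> 1" and le: "\<And>m n. g m n \<le> 1"
  shows "\<exists>h. filterlim h at_top sequentially \<and> (\<lambda>n. g (h n) n) \<longlonglongrightarrow> 1"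
proof -
  have "\<forall>m. \<exists>N. \<forall>n\<ge>N. 1 - 1 / real (Suc m) < g m n"
    using order_tendstoD(1)[OF lim] unfolding eventually_sequentially by simp
  then obtain N where N: "\<And>m n. N m \<le> n \<Longrightarrow> 1 - 1 / real (Suc m) < g m n" by metis
  define h where "h n = Max {m. m \<le> n \<and> N m \<le> n}" for n
  have h: "h n \<in> {m. m \<le> n \<and> N m \<le> n}" if "N 0 \<le> n" for n
    unfolding h_def using that by (intro Max_in) auto
  have h_ge: "m \<le> h n" if "m + N m \<le> n" for m n
    unfolding h_def using that by (intro Max_ge) auto
  have h_lim: "filterlim h at_top sequentially"
    unfolding filterlim_at_top eventually_sequentially
  proof
    fix m
    show "\<exists>n0. \<forall>n\<ge>n0. m \<le> h n" using h_ge[of m] by blast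
  qed
  have "(\<lambda>m. 1 - 1 / real (Suc m)) \<longlonglongrightarrow> 1"
    using tendsto_diff[OF tendsto_const LIMSEQ_Suc[OF lim_const_over_n[of 1]]] by simp
  from filterlim_compose[OF this h_lim]
  have lower_lim: "(\<lambda>n. 1 - 1 / real (Suc (h n))) \<longlonglongrightarrow> 1" .
  have lower: "eventually (\<lambda>n. 1 - 1 / real (Suc (h n)) \<le> g (h n) n) sequentially"
  proof (rule eventually_sequentiallyI)
    fix n assume "N 0 \<le> n"
    then show "1 - 1 / real (Suc (h n)) \<le> g (h n) n"
      using h N[of "h n" n] by simp
  qed
  have upper: "eventually (\<lambda>n. g (h n) n \<le> 1) sequentially"
    using le by simp
  have "(\<lambda>n. g (h n) n) \<longlonglongrightarrow> 1"
    using tendsto_sandwich[OF lower upper lower_lim tendsto_const] .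
  then show ?thesis using h_lim by blast
qed

theorem theorem4:
  fixes M :: "real^'d \<Rightarrow> real" and S T :: "real^'d"
    and \<sigma>s :: "real \<Rightarrow> real^'d" and r :: "nat \<Rightarrow> real" and \<delta>' \<delta>'' :: real
  assumes dim: "CARD('d) \<ge> 2"
    and S_in: "S \<in> unit_cube" and T_in: "T \<in> unit_cube"
    and opt: "robustly_optimal_monotone M S T \<sigma>s"
    and d1: "\<delta>' > 0" and tube_in: "tube \<delta>' \<sigma>s \<subseteq> unit_cube"
    and d2: "0 < \<delta>''" "\<delta>'' \<le> 1" and ST: "preceq_delta S \<delta>'' T"
    and rn: "filterlim (\<lambda>n. r n / (ln (real n) / real n) powr (1 / real CARD('d))) at_top at_top"
  shows "\<exists>\<epsilon>::nat \<Rightarrow> real. \<epsilon> \<longlonglongrightarrow> 0 \<and>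
    (\<lambda>n. inner_prob (sample_space n)
       {\<omega> \<in> space (sample_space n). \<exists>vs.
          mono_graph_path (\<omega> ` {..<n} \<union> {S, T}) (r n) S T vs \<and>
          polygonal vs \<in> Sigma_paths S T \<and>
          bcost M (polygonal vs) \<le> ereal (1 + \<epsilon> n) * bcost M \<sigma>s}) \<longlonglongrightarrow> 1"
proof -
  have rob: "robust M S T \<sigma>s" and mono: "mono_path \<sigma>s"
    using opt unfolding robustly_optimal_monotone_def by auto
  have gap: "\<And>i. \<delta>'' \<le> T $ i - S $ i"
    using ST unfolding preceq_delta_def by (auto intro: Min_le)
  define g where "g m n = inner_prob (sample_space n) (graph_path_event n (r n) S T
      (\<lambda>\<gamma>. bcost M \<gamma> \<le> ereal (1 + 1 / real (Suc m)) * bcost M \<sigma>s))" for m n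
  have "g m \<longlonglongrightarrow> 1" for m
    unfolding g_def
    by (rule tendsto_prob_graph_path_near_optimal[OF rob mono d1 tube_in gap d2 rn]) simp
  moreover have "g m n \<le> 1" for m n
    unfolding g_def by (rule inner_prob_le_1[OF prob_space_sample_space])
  ultimately obtain h where h: "filterlim h at_top sequentially" "(\<lambda>n. g (h n) n) \<longlonglongrightarrow> 1"
    using diagonal_sequence_tendsto_1 by blast
  have "(\<lambda>n. 1 / real (Suc (h n))) \<longlonglongrightarrow> 0"
    using filterlim_compose[OF LIMSEQ_Suc[OF lim_const_over_n[of 1]] h(1)] by simp
  then show ?thesis
    using h(2) unfolding g_def graph_path_event_def
    by (intro exI[of _ "\<lambda>n. 1 / real (Suc (h n))"]) simp
qed

end
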